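(* Let $X=(X_1,\dots,X_n)$ be a random vector in $\mathcal{X}^n$ whose distribution is exchangeable, let $T:\mathcal{X}^n\to\mathbb{R}$ be a fixed (measurable) function, and let $q$ be any probability distribution on $\mathcal{S}_n$. Define $$\bar P=\sum_{\sigma,\sigma_0\in\mathcal{S}_n}q(\sigma)\,q(\sigma_0)\,\mathbf{1}\{T(X_{\sigma\circ\sigma_0^{-1}})\ge T(X)\}.$$ Then $\mathbb{P}\{\bar P\le\alpha\}\le2\alpha$ for all $\alpha\in[0,1]$.
   Context: $\mathcal{S}_n$ denotes the set (group) of all permutations of $[n]=\{1,\dots,n\}$. For $x\in\mathcal{X}^n$ and $\sigma\in\mathcal{S}_n$, $x_\sigma:=(x_{\sigma(1)},\dots,x_{\sigma(n)})$. $X$ is exchangeable means $X\stackrel{d}{=}X_\pi$ for every fixed $\pi\in\mathcal{S}_n$. $q(\sigma)$ denotes the probability that $q$ assigns to $\sigma$. *)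

theory Defs
  imports "HOL-Probability.Probability" "HOL-Combinatorics.Permutations"
begin

text \<open>The index set [n] is modelled by a finite type 'n; a point of X^n is a
function 'n => 'x; for sigma a permutation, x_sigma = x o sigma, i.e.
x_sigma(i) = x(sigma(i)).\<close>

definition perm_set :: "('n::finite \<Rightarrow> 'n) set" where
  "perm_set = {\<sigma>. \<sigma> permutes (UNIV :: 'n set)}"

definition permute_vec :: "('n \<Rightarrow> 'x) \<Rightarrow> ('n \<Rightarrow> 'n) \<Rightarrow> ('n \<Rightarrow> 'x)" where
  "permute_vec x \<sigma> = (\<lambda>i. x (\<sigma> i))"

definition exchangeable ::
  "'a measure \<Rightarrow> 'x measure \<Rightarrow> ('a \<Rightarrow> ('n::finite \<Rightarrow> 'x)) \<Rightarrow> bool" where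
  "exchangeable M N X \<longleftrightarrow>
     (\<forall>\<pi>\<in>perm_set. distr M (PiM UNIV (\<lambda>_. N)) (\<lambda>\<omega>. permute_vec (X \<omega>) \<pi>)
                    = distr M (PiM UNIV (\<lambda>_. N)) X)"

definition Pbar :: "(('n::finite) \<Rightarrow> 'n) pmf \<Rightarrow> (('n \<Rightarrow> 'x) \<Rightarrow> real) \<Rightarrow> ('n \<Rightarrow> 'x) \<Rightarrow> real" where
  "Pbar q T x = (\<Sum>\<sigma>\<in>perm_set. \<Sum>\<sigma>\<^sub>0\<in>perm_set.
      pmf q \<sigma> * pmf q \<sigma>\<^sub>0 *
      (if T (permute_vec x (\<sigma> \<circ> inv \<sigma>\<^sub>0)) \<ge> T x then 1 else 0))"

end

theory Submission
  imports Defs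
begin

text \<open>Fix a sample \<open>x\<close> and put \<open>t \<pi> = T(x\<^sub>\<pi>)\<close>. Exchangeability makes
  \<open>P{P\<^sup>\<dagger>(X) \<le> \<alpha>}\<close> (writing \<open>P\<^sup>\<dagger>\<close> for \<open>Pbar q T\<close>) the expected fraction of permutations
  \<open>\<pi>\<close> with \<open>P\<^sup>\<dagger>(X\<^sub>\<pi>) \<le> \<alpha>\<close>, so it suffices to bound that fraction by \<open>2\<alpha>\<close> for every \<open>x\<close>.
  Write \<open>P\<^sup>\<dagger>(x\<^sub>\<pi>) = \<Sum>\<^sub>\<sigma> q(\<sigma>) p(\<pi>,\<sigma>)\<close> with \<open>p(\<pi>,\<sigma>) = \<Sum>\<^sub>\<sigma>\<^sub>0 q(\<sigma>\<^sub>0) 1{t(\<pi>\<sigma>\<sigma>\<^sub>0\<inverse>) \<ge> t(\<pi>)}\<close>.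
  Substituting \<open>\<pi> = \<rho>\<sigma>\<inverse>\<close>, \<open>p(\<rho>\<sigma>\<inverse>,\<sigma>)\<close> is the \<open>q\<close>-mass of the upper tail
  \<open>{\<sigma>\<^sub>0. s(\<sigma>\<^sub>0) \<ge> s(\<sigma>)}\<close> of the score \<open>s(c) = t(\<rho>c\<inverse>)\<close>. For arbitrary weights the
  upper-tail masses \<open>P\<^sub>i\<close> satisfy \<open>\<Sum>\<^sub>i w\<^sub>i (m - P\<^sub>i)\<^sub>+ \<le> m\<^sup>2/2\<close>; summing over \<open>\<rho>\<close> and
  using \<open>p \<ge> m - (m - p)\<^sub>+\<close> on \<open>A = {\<pi>. P\<^sup>\<dagger>(x\<^sub>\<pi>) \<le> \<alpha>}\<close> gives
  \<open>\<alpha>|A| \<ge> m|A| - n! m\<^sup>2/2\<close>, which for \<open>m = |A|/n!\<close> reads \<open>|A| \<le> 2\<alpha> n!\<close>.\<close>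

lemma half_square_sum_le_weighted_sum:
  fixes w y :: "'b \<Rightarrow> real"
  assumes "finite J"
    and "\<And>i. i \<in> J \<Longrightarrow> 0 \<le> w i"
    and "\<And>i. i \<in> J \<Longrightarrow> sum w {j\<in>J. y j \<le> y i} \<le> y i"
  shows "(sum w J)\<^sup>2 / 2 \<le> (\<Sum>i\<in>J. w i * y i)"
  using assms
proof (induction J rule: finite_ranking_induct[where f = y])
  case empty
  then show ?case by simp
next
  case (insert k J)
  show ?case
  proof (cases "k \<in> J")
    case True
    then show ?thesis using insert by (simp add: insert_absorb)
  next
    case False
    have "sum w {j\<in>J. y j \<le> y i} \<le> y i" if "i \<in> J" for i
    proof -
      have "sum w {j\<in>J. y j \<le> y i} \<le> sum w {j\<in>insert k J. y j \<le> y i}"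
        using insert.hyps(1) insert.prems(1) by (intro sum_mono2) auto
      also have "\<dots> \<le> y i" using insert.prems(2) that by blast
      finally show ?thesis .
    qed
    then have IH: "(sum w J)\<^sup>2 / 2 \<le> (\<Sum>i\<in>J. w i * y i)"
      using insert.IH insert.prems(1) by blast
    have "{j\<in>insert k J. y j \<le> y k} = insert k J" using insert.hyps(2) by auto
    then have "w k + sum w J \<le> y k"
      using insert.prems(2)[of k] insert.hyps(1) False by simp
    then have "w k * w k + w k * sum w J \<le> w k * y k"
      using insert.prems(1)[of k] by (metis distrib_left insertI1 mult_left_mono)
    moreover have "(w k + sum w J)\<^sup>2 = w k * w k + 2 * (w k * sum w J) + (sum w J)\<^sup>2"
      by (simp add: power2_eq_square algebra_simps)
    moreover have "0 \<le> w k * w k" by simp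
    ultimately have "(w k + sum w J)\<^sup>2 / 2 \<le> w k * y k + (\<Sum>i\<in>J. w i * y i)"
      using IH by linarith
    then show ?thesis using insert.hyps(1) False by simp
  qed
qed

definition upper_tail_weight :: "('b \<Rightarrow> real) \<Rightarrow> 'b set \<Rightarrow> ('b \<Rightarrow> 'c::linorder) \<Rightarrow> 'b \<Rightarrow> real" where
  "upper_tail_weight w I s i = sum w {j\<in>I. s i \<le> s j}"

lemma upper_tail_weight_superuniform:
  assumes "finite I" "\<And>j. j \<in> I \<Longrightarrow> 0 \<le> w j" "i \<in> I"
  shows "sum w {j\<in>I. upper_tail_weight w I s j \<le> upper_tail_weight w I s i}
           \<le> upper_tail_weight w I s i"
proof -
  let ?P = "upper_tail_weight w I s"
  have "w j = 0" if j: "j \<in> I" "?P j \<le> ?P i" "s j < s i" for j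
  proof -
    have "w j + ?P i = sum w (insert j {l\<in>I. s i \<le> s l})"
      using assms(1) j by (simp add: upper_tail_weight_def)
    also have "\<dots> \<le> ?P j"
      unfolding upper_tail_weight_def using assms j by (intro sum_mono2) auto
    finally show ?thesis using j assms(2) by force
  qed
  then have "sum w {j\<in>I. ?P j \<le> ?P i} = sum w {j\<in>I. ?P j \<le> ?P i \<and> s i \<le> s j}"
    using assms(1) by (intro sum.mono_neutral_right) (auto, meson not_le)
  also have "\<dots> \<le> ?P i"
    unfolding upper_tail_weight_def using assms by (intro sum_mono2) auto
  finally show ?thesis .
qed

lemma sum_weighted_tail_deficit_le:
  fixes m :: real
  assumes "finite I" "\<And>j. j \<in> I \<Longrightarrow> 0 \<le> w j"
  shows "(\<Sum>i\<in>I. w i * max 0 (m - upper_tail_weight w I s i)) \<le> m\<^sup>2 / 2"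
proof -
  let ?P = "upper_tail_weight w I s"
  define J where "J = {i\<in>I. ?P i < m}"
  have J: "finite J" "J \<subseteq> I" using assms(1) by (auto simp: J_def)
  have "(\<Sum>i\<in>I. w i * max 0 (m - ?P i)) = (\<Sum>i\<in>J. w i * (m - ?P i))"
    using assms(1) J by (intro sum.mono_neutral_cong_right) (auto simp: J_def)
  also have "\<dots> = m * sum w J - (\<Sum>i\<in>J. w i * ?P i)"
    by (simp add: algebra_simps sum_subtractf sum_distrib_left)
  also have "\<dots> \<le> m * sum w J - (sum w J)\<^sup>2 / 2"
  proof -
    have "sum w {j\<in>J. ?P j \<le> ?P i} \<le> ?P i" if "i \<in> J" for i
    proof -
      have "sum w {j\<in>J. ?P j \<le> ?P i} \<le> sum w {j\<in>I. ?P j \<le> ?P i}"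
        using assms J by (intro sum_mono2) auto
      also have "\<dots> \<le> ?P i"
        using assms that J by (intro upper_tail_weight_superuniform) auto
      finally show ?thesis .
    qed
    then have "(sum w J)\<^sup>2 / 2 \<le> (\<Sum>i\<in>J. w i * ?P i)"
      using assms J by (intro half_square_sum_le_weighted_sum) auto
    then show ?thesis by linarith
  qed
  also have "\<dots> \<le> m\<^sup>2 / 2"
    using zero_le_power2[of "m - sum w J"] by (simp add: power2_eq_square algebra_simps)
  finally show ?thesis .
qed

lemma finite_perm_set: "finite (perm_set :: ('n::finite \<Rightarrow> 'n) set)"
  by (rule finite_subset[OF subset_UNIV]) simp

lemma card_perm_set_pos: "0 < card (perm_set :: ('n::finite \<Rightarrow> 'n) set)"
proof -
  have "id \<in> (perm_set :: ('n \<Rightarrow> 'n) set)" by (simp add: perm_set_def)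
  then show ?thesis using finite_perm_set card_gt_0_iff by blast
qed

lemma bij_betw_comp_inv_perm_set:
  assumes "\<sigma> \<in> perm_set"
  shows "bij_betw (\<lambda>\<rho>. \<rho> \<circ> inv \<sigma>) (perm_set :: ('n::finite \<Rightarrow> 'n) set) perm_set"
proof (rule bij_betw_byWitness[where f' = "\<lambda>\<rho>. \<rho> \<circ> \<sigma>"])
  have \<sigma>: "\<sigma> permutes UNIV" using assms by (simp add: perm_set_def)
  show "\<forall>\<rho>\<in>perm_set. \<rho> \<circ> inv \<sigma> \<circ> \<sigma> = \<rho>" "\<forall>\<rho>\<in>perm_set. \<rho> \<circ> \<sigma> \<circ> inv \<sigma> = \<rho>"
    using permutes_inv_o[OF \<sigma>] by (simp_all add: comp_assoc)
  show "(\<lambda>\<rho>. \<rho> \<circ> inv \<sigma>) ` perm_set \<subseteq> perm_set" "(\<lambda>\<rho>. \<rho> \<circ> \<sigma>) ` perm_set \<subseteq> perm_set"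
    using permutes_compose[OF permutes_inv[OF \<sigma>]] permutes_compose[OF \<sigma>]
    by (auto simp: perm_set_def)
qed

definition perm_pvalue ::
  "('n::finite \<Rightarrow> 'n) pmf \<Rightarrow> (('n \<Rightarrow> 'n) \<Rightarrow> real) \<Rightarrow> ('n \<Rightarrow> 'n) \<Rightarrow> ('n \<Rightarrow> 'n) \<Rightarrow> real" where
  "perm_pvalue q t \<pi> \<sigma> =
     (\<Sum>\<sigma>\<^sub>0\<in>perm_set. pmf q \<sigma>\<^sub>0 * (if t (\<pi> \<circ> (\<sigma> \<circ> inv \<sigma>\<^sub>0)) \<ge> t \<pi> then 1 else 0))"

lemma Pbar_permute_vec:
  "Pbar q T (permute_vec x \<pi>) =
     (\<Sum>\<sigma>\<in>perm_set. pmf q \<sigma> * perm_pvalue q (\<lambda>\<rho>. T (permute_vec x \<rho>)) \<pi> \<sigma>)"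
  by (simp add: Pbar_def perm_pvalue_def permute_vec_def sum_distrib_left mult.assoc)

lemma perm_pvalue_comp_inv:
  fixes \<sigma> \<rho> :: "'n::finite \<Rightarrow> 'n"
  assumes "\<sigma> \<in> perm_set"
  shows "perm_pvalue q t (\<rho> \<circ> inv \<sigma>) \<sigma> = upper_tail_weight (pmf q) perm_set (\<lambda>c. t (\<rho> \<circ> inv c)) \<sigma>"
proof -
  have "inv \<sigma> \<circ> \<sigma> = id" using assms permutes_inv_o(2) by (auto simp: perm_set_def)
  then have "\<rho> \<circ> inv \<sigma> \<circ> (\<sigma> \<circ> inv \<sigma>\<^sub>0) = \<rho> \<circ> inv \<sigma>\<^sub>0" for \<sigma>\<^sub>0 :: "'n \<Rightarrow> 'n"
    by (metis comp_assoc comp_id)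
  then show ?thesis
    using finite_perm_set
    by (simp add: perm_pvalue_def upper_tail_weight_def sum.inter_filter[symmetric] if_distrib
             cong: if_cong)
qed

lemma sum_perm_pvalue_deficit_le:
  fixes q :: "('n::finite \<Rightarrow> 'n) pmf" and m :: real
  shows "(\<Sum>\<pi>\<in>perm_set. \<Sum>\<sigma>\<in>perm_set. pmf q \<sigma> * max 0 (m - perm_pvalue q t \<pi> \<sigma>))
           \<le> card (perm_set :: ('n \<Rightarrow> 'n) set) * (m\<^sup>2 / 2)"
proof -
  let ?f = "\<lambda>\<pi> \<sigma>. pmf q \<sigma> * max 0 (m - perm_pvalue q t \<pi> \<sigma>)"
  have "(\<Sum>\<pi>\<in>perm_set. \<Sum>\<sigma>\<in>perm_set. ?f \<pi> \<sigma>) = (\<Sum>\<sigma>\<in>perm_set. \<Sum>\<pi>\<in>perm_set. ?f \<pi> \<sigma>)"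
    by (rule sum.swap)
  also have "\<dots> = (\<Sum>\<sigma>\<in>perm_set. \<Sum>\<rho>\<in>perm_set. ?f (\<rho> \<circ> inv \<sigma>) \<sigma>)"
    by (intro sum.cong refl sum.reindex_bij_betw[symmetric] bij_betw_comp_inv_perm_set)
  also have "\<dots> = (\<Sum>\<rho>\<in>perm_set. \<Sum>\<sigma>\<in>perm_set. ?f (\<rho> \<circ> inv \<sigma>) \<sigma>)"
    by (rule sum.swap)
  also have "\<dots> = (\<Sum>\<rho>\<in>perm_set. \<Sum>\<sigma>\<in>perm_set.
      pmf q \<sigma> * max 0 (m - upper_tail_weight (pmf q) perm_set (\<lambda>c. t (\<rho> \<circ> inv c)) \<sigma>))"
    by (simp add: perm_pvalue_comp_inv)
  also have "\<dots> \<le> (\<Sum>\<rho>\<in>(perm_set :: ('n \<Rightarrow> 'n) set). m\<^sup>2 / 2)"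
    by (intro sum_mono sum_weighted_tail_deficit_le finite_perm_set pmf_nonneg)
  finally show ?thesis by simp
qed

lemma perm_pvalue_average_ge:
  fixes q :: "('n::finite \<Rightarrow> 'n) pmf" and m :: real
  assumes "set_pmf q \<subseteq> perm_set"
  shows "m - (\<Sum>\<sigma>\<in>perm_set. pmf q \<sigma> * max 0 (m - perm_pvalue q t \<pi> \<sigma>))
           \<le> (\<Sum>\<sigma>\<in>perm_set. pmf q \<sigma> * perm_pvalue q t \<pi> \<sigma>)"
proof -
  have "(\<Sum>\<sigma>\<in>perm_set. pmf q \<sigma>) = 1" by (rule sum_pmf_eq_1[OF finite_perm_set assms])
  then have "m - (\<Sum>\<sigma>\<in>perm_set. pmf q \<sigma> * max 0 (m - perm_pvalue q t \<pi> \<sigma>))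
      = (\<Sum>\<sigma>\<in>perm_set. pmf q \<sigma> * (m - max 0 (m - perm_pvalue q t \<pi> \<sigma>)))"
    by (simp add: right_diff_distrib sum_subtractf mult.commute[of _ m] sum_distrib_left[symmetric])
  also have "\<dots> \<le> (\<Sum>\<sigma>\<in>perm_set. pmf q \<sigma> * perm_pvalue q t \<pi> \<sigma>)"
    by (intro sum_mono mult_left_mono) auto
  finally show ?thesis .
qed

lemma card_perm_pvalue_average_le:
  fixes q :: "('n::finite \<Rightarrow> 'n) pmf" and \<alpha> :: real
  assumes "set_pmf q \<subseteq> perm_set" and "0 \<le> \<alpha>"
  shows "card {\<pi>\<in>perm_set. (\<Sum>\<sigma>\<in>perm_set. pmf q \<sigma> * perm_pvalue q t \<pi> \<sigma>) \<le> \<alpha>}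
           \<le> 2 * \<alpha> * card (perm_set :: ('n \<Rightarrow> 'n) set)"
proof -
  let ?F = "\<lambda>\<pi>. \<Sum>\<sigma>\<in>perm_set. pmf q \<sigma> * perm_pvalue q t \<pi> \<sigma>"
  let ?D = "\<lambda>m \<pi>. \<Sum>\<sigma>\<in>perm_set. pmf q \<sigma> * max 0 (m - perm_pvalue q t \<pi> \<sigma>)"
  define A where "A = {\<pi>\<in>perm_set. ?F \<pi> \<le> \<alpha>}"
  define N where "N = real (card (perm_set :: ('n \<Rightarrow> 'n) set))"
  define m where "m = card A / N"
  have N: "0 < N" using card_perm_set_pos by (simp add: N_def)
  have A: "finite A" "A \<subseteq> perm_set" using finite_perm_set by (auto simp: A_def)
  text \<open>Choosing the level \<open>m = |A| / N\<close> balances the lower and upper bounds on \<open>\<Sum>\<pi>\<in>A. ?F \<pi>\<close>.\<close>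
  have "m * card A - N * (m\<^sup>2 / 2) \<le> (\<Sum>\<pi>\<in>A. m - ?D m \<pi>)"
  proof -
    have "(\<Sum>\<pi>\<in>A. ?D m \<pi>) \<le> (\<Sum>\<pi>\<in>perm_set. ?D m \<pi>)"
      using A finite_perm_set by (intro sum_mono2) (auto intro!: sum_nonneg)
    also have "\<dots> \<le> N * (m\<^sup>2 / 2)" unfolding N_def by (rule sum_perm_pvalue_deficit_le)
    finally show ?thesis by (simp add: sum_subtractf)
  qed
  also have "\<dots> \<le> (\<Sum>\<pi>\<in>A. ?F \<pi>)"
    by (intro sum_mono perm_pvalue_average_ge assms(1))
  also have "\<dots> \<le> \<alpha> * card A" using sum_mono[of A ?F "\<lambda>_. \<alpha>"] by (simp add: A_def mult.commute)
  finally have "m * card A - N * (m\<^sup>2 / 2) \<le> \<alpha> * card A" .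
  moreover have "N * (m\<^sup>2 / 2) = m * card A / 2"
    using N by (simp add: m_def power2_eq_square)
  ultimately have "card A * (card A / N) \<le> card A * (2 * \<alpha>)" by (simp add: m_def algebra_simps)
  then have "card A \<le> 2 * \<alpha> * N"
    using N assms(2) by (cases "card A = 0") (auto simp: field_simps)
  then show ?thesis by (simp add: A_def N_def)
qed

lemma card_Pbar_permute_vec_le:
  fixes q :: "('n::finite \<Rightarrow> 'n) pmf" and \<alpha> :: real
  assumes "set_pmf q \<subseteq> perm_set" and "0 \<le> \<alpha>"
  shows "card {\<pi>\<in>perm_set. Pbar q T (permute_vec x \<pi>) \<le> \<alpha>}
           \<le> 2 * \<alpha> * card (perm_set :: ('n \<Rightarrow> 'n) set)"
  unfolding Pbar_permute_vec by (rule card_perm_pvalue_average_le[OF assms])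

lemma measurable_permute_vec:
  "(\<lambda>x. permute_vec x \<pi>) \<in> measurable (PiM UNIV (\<lambda>_. N)) (PiM UNIV (\<lambda>_. N))"
  unfolding permute_vec_def by (rule measurable_PiM_single') (auto simp: space_PiM)

lemma measurable_Pbar:
  assumes "T \<in> borel_measurable (PiM UNIV (\<lambda>_. N))"
  shows "Pbar q T \<in> borel_measurable (PiM (UNIV :: 'n::finite set) (\<lambda>_. N))"
proof -
  have "(\<lambda>x. T (permute_vec x \<tau>)) \<in> borel_measurable (PiM (UNIV :: 'n set) (\<lambda>_. N))"
    for \<tau> :: "'n \<Rightarrow> 'n"
    using measurable_comp[OF measurable_permute_vec assms] by (simp add: o_def)
  then show ?thesis unfolding Pbar_def using assms by measurable
qed

lemma exchangeable_measure_permuted: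
  assumes "X \<in> measurable M (PiM UNIV (\<lambda>_. N))" "exchangeable M N X"
    and "B \<in> sets (PiM UNIV (\<lambda>_. N))" "\<pi> \<in> perm_set"
  shows "measure M ((\<lambda>\<omega>. permute_vec (X \<omega>) \<pi>) -` B \<inter> space M) = measure M (X -` B \<inter> space M)"
proof -
  have X\<pi>: "(\<lambda>\<omega>. permute_vec (X \<omega>) \<pi>) \<in> measurable M (PiM UNIV (\<lambda>_. N))"
    using measurable_comp[OF assms(1) measurable_permute_vec] by (simp add: o_def)
  have "measure M ((\<lambda>\<omega>. permute_vec (X \<omega>) \<pi>) -` B \<inter> space M)
      = measure (distr M (PiM UNIV (\<lambda>_. N)) (\<lambda>\<omega>. permute_vec (X \<omega>) \<pi>)) B"
    by (rule measure_distr[OF X\<pi> assms(3), symmetric])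
  also have "\<dots> = measure (distr M (PiM UNIV (\<lambda>_. N)) X) B"
    using assms(2,4) by (simp add: exchangeable_def)
  also have "\<dots> = measure M (X -` B \<inter> space M)"
    by (rule measure_distr[OF assms(1,3)])
  finally show ?thesis .
qed

lemma exchangeable_measure_le_orbit_fraction:
  fixes X :: "'a \<Rightarrow> ('n::finite \<Rightarrow> 'x)" and c :: real
  assumes "prob_space M" "X \<in> measurable M (PiM UNIV (\<lambda>_. N))" "exchangeable M N X"
    and "B \<in> sets (PiM UNIV (\<lambda>_. N))"
    and "\<And>x. card {\<pi>\<in>perm_set. permute_vec x \<pi> \<in> B} \<le> c * card (perm_set :: ('n \<Rightarrow> 'n) set)"
  shows "measure M (X -` B \<inter> space M) \<le> c"
proof -
  interpret prob_space M by fact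
  let ?E = "\<lambda>\<pi>. (\<lambda>\<omega>. permute_vec (X \<omega>) \<pi>) -` B \<inter> space M"
  have E: "?E \<pi> \<in> sets M" for \<pi>
    using measurable_comp[OF assms(2) measurable_permute_vec] assms(4)
    by (simp add: o_def measurable_sets)
  then have int: "integrable M (indicator (?E \<pi>) :: 'a \<Rightarrow> real)" for \<pi>
    by (simp add: less_top[symmetric])
  have "card (perm_set :: ('n \<Rightarrow> 'n) set) * measure M (X -` B \<inter> space M)
      = (\<Sum>\<pi>\<in>perm_set. measure M (?E \<pi>))"
    using assms by (simp add: exchangeable_measure_permuted)
  also have "\<dots> = (\<Sum>\<pi>\<in>perm_set. integral\<^sup>L M (indicator (?E \<pi>)))"
    by (simp add: Int_assoc)
  also have "\<dots> = integral\<^sup>L M (\<lambda>\<omega>. \<Sum>\<pi>\<in>perm_set. indicator (?E \<pi>) \<omega>)"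
    using int by (intro Bochner_Integration.integral_sum[symmetric])
  also have "\<dots> \<le> c * card (perm_set :: ('n \<Rightarrow> 'n) set)"
  proof (rule integral_le_const)
    show "integrable M (\<lambda>\<omega>. \<Sum>\<pi>\<in>perm_set. indicator (?E \<pi>) \<omega> :: real)"
      using int by auto
    have "(\<Sum>\<pi>\<in>perm_set. indicator (?E \<pi>) \<omega>) = real (card {\<pi>\<in>perm_set. permute_vec (X \<omega>) \<pi> \<in> B})"
      if "\<omega> \<in> space M" for \<omega>
      using that finite_perm_set by (simp add: indicator_def sum.If_cases Int_def)
    then show "AE \<omega> in M. (\<Sum>\<pi>\<in>perm_set. indicator (?E \<pi>) \<omega>) \<le> c * card (perm_set :: ('n \<Rightarrow> 'n) set)"
      using assms(5) by (intro AE_I2) simp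
  qed
  finally show ?thesis using card_perm_set_pos[where 'n = 'n] by (simp add: mult.commute[of c])
qed

theorem theorem8:
  fixes M :: "'a measure" and N :: "'x measure"
    and X :: "'a \<Rightarrow> ('n::finite \<Rightarrow> 'x)"
    and T :: "('n \<Rightarrow> 'x) \<Rightarrow> real"
    and q :: "('n \<Rightarrow> 'n) pmf"
    and \<alpha> :: real
  assumes "prob_space M"
    and "X \<in> measurable M (PiM UNIV (\<lambda>_. N))"
    and "exchangeable M N X"
    and "T \<in> borel_measurable (PiM UNIV (\<lambda>_. N))"
    and "set_pmf q \<subseteq> perm_set"
    and "0 \<le> \<alpha>" and "\<alpha> \<le> 1"
  shows "measure M {\<omega> \<in> space M. Pbar q T (X \<omega>) \<le> \<alpha>} \<le> 2 * \<alpha>"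
proof -
  define B where "B = {x \<in> space (PiM UNIV (\<lambda>_. N)). Pbar q T x \<le> \<alpha>}"
  have "B \<in> sets (PiM UNIV (\<lambda>_. N))"
    unfolding B_def using measurable_Pbar[OF assms(4)] by measurable
  moreover have "card {\<pi>\<in>perm_set. permute_vec x \<pi> \<in> B} \<le> 2 * \<alpha> * card (perm_set :: ('n \<Rightarrow> 'n) set)"
    for x
  proof -
    have "card {\<pi>\<in>perm_set. permute_vec x \<pi> \<in> B} \<le> card {\<pi>\<in>perm_set. Pbar q T (permute_vec x \<pi>) \<le> \<alpha>}"
      using finite_perm_set by (intro card_mono) (auto simp: B_def)
    then show ?thesis
      using card_Pbar_permute_vec_le[OF assms(5,6), of T x] by (meson of_nat_le_iff order_trans)
  qed
  ultimately have "measure M (X -` B \<inter> space M) \<le> 2 * \<alpha>"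
    by (rule exchangeable_measure_le_orbit_fraction[OF assms(1-3)])
  moreover have "X -` B \<inter> space M = {\<omega> \<in> space M. Pbar q T (X \<omega>) \<le> \<alpha>}"
    using measurable_space[OF assms(2)] by (auto simp: B_def)
  ultimately show ?thesis by simp
qed

end
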